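(* Let $\mathfrak{S}=(\mathcal{X},\mathsf{S},\gamma,(\Lambda_{a})_{a\in\mathcal{A}})$ be a spectral decomposition system for the Euclidean space $\mathfrak{H}$ and let $D$ be an $\mathsf{S}$-invariant subset of $\mathcal{X}$. Then: (i) $\operatorname{int}\gamma^{-1}(D)=\gamma^{-1}(\operatorname{int}D)$; (ii) $\overline{\gamma^{-1}(D)}=\gamma^{-1}(\overline{D})$ (closures); (iii) $\gamma^{-1}(D)$ is closed if and only if $D$ is closed; (iv) $\gamma^{-1}(D)$ is convex if and only if $D$ is convex.
   Context: A Euclidean space is a finite-dimensional real inner product space; inner products are written $\langle\cdot,\cdot\rangle$ and norms $\|\cdot\|$. Let $\mathfrak{H}$ and $\mathcal{X}$ be Euclidean spaces, let $\mathsf{S}$ be a group acting on $\mathcal{X}$ by linear isometries, let $\gamma\colon\mathfrak{H}\to\mathcal{X}$, and let $(\Lambda_a)_{a\in\mathcal{A}}$ be a family of linear operators from $\mathcal{X}$ to $\mathfrak{H}$. The orbit of $x$ is $\mathsf{S}\cdot x=\{s\cdot x: s\in\mathsf{S}\}$; a map $f$ on $\mathcal{X}$ is $\mathsf{S}$-invariant if $f(s\cdot x)=f(x)$ for all $s,x$; a subset $D$ of $\mathcal{X}$ is $\mathsf{S}$-invariant if $s\cdot x\in D$ whenever $x\in D$, $s\in\mathsf{S}$. The tuple is a spectral decomposition system for $\mathfrak{H}$ if: [A] every $\Lambda_a$ is an isometry; [B] there exists an $\mathsf{S}$-invariant $\tau\colon\mathcal{X}\to\mathcal{X}$ with $\tau(x)\in\mathsf{S}\cdot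 x$ for all $x$ and $\gamma\circ\Lambda_a=\tau$ for all $a$; [C] for every $X\in\mathfrak{H}$ there is $a$ with $X=\Lambda_a\gamma(X)$; [D] $\langle X,Y\rangle\leq\langle\gamma(X),\gamma(Y)\rangle$ for all $X,Y\in\mathfrak{H}$. *)

theory Defs
  imports "HOL-Analysis.Analysis"
begin

definition lin_isometry_group :: "('x::euclidean_space \<Rightarrow> 'x) set \<Rightarrow> bool" where
  "lin_isometry_group S \<longleftrightarrow>
     id \<in> S \<and> (\<forall>s\<in>S. \<forall>t\<in>S. s \<circ> t \<in> S) \<and>
     (\<forall>s\<in>S. \<exists>t\<in>S. s \<circ> t = id \<and> t \<circ> s = id) \<and>
     (\<forall>s\<in>S. linear s \<and> (\<forall>x. norm (s x) = norm x))"

definition orbit :: "('x \<Rightarrow> 'x) set \<Rightarrow> 'x \<Rightarrow> 'x set" where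
  "orbit S x = (\<lambda>s. s x) ` S"

definition S_invariant_fun :: "('x \<Rightarrow> 'x) set \<Rightarrow> ('x \<Rightarrow> 'b) \<Rightarrow> bool" where
  "S_invariant_fun S f \<longleftrightarrow> (\<forall>s\<in>S. \<forall>x. f (s x) = f x)"

definition S_invariant_set :: "('x \<Rightarrow> 'x) set \<Rightarrow> 'x set \<Rightarrow> bool" where
  "S_invariant_set S D \<longleftrightarrow> (\<forall>s\<in>S. \<forall>x\<in>D. s x \<in> D)"

definition spectral_decomposition_system ::
  "('x::euclidean_space \<Rightarrow> 'x) set \<Rightarrow> ('h::euclidean_space \<Rightarrow> 'x) \<Rightarrow> 'a set \<Rightarrow> ('a \<Rightarrow> 'x \<Rightarrow> 'h) \<Rightarrow> bool"
where
  "spectral_decomposition_system S \<gamma> A \<Lambda> \<longleftrightarrow>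
     lin_isometry_group S \<and>
     (\<forall>a\<in>A. linear (\<Lambda> a) \<and> (\<forall>x. norm (\<Lambda> a x) = norm x)) \<and>
     (\<exists>\<tau>. S_invariant_fun S \<tau> \<and> (\<forall>x. \<tau> x \<in> orbit S x) \<and> (\<forall>a\<in>A. \<gamma> \<circ> \<Lambda> a = \<tau>)) \<and>
     (\<forall>X. \<exists>a\<in>A. X = \<Lambda> a (\<gamma> X)) \<and>
     (\<forall>X Y. inner X Y \<le> inner (\<gamma> X) (\<gamma> Y))"

end

theory Submission
  imports Defs
begin

text \<open>
  Every \<open>X\<close> is \<open>\<Lambda>\<^sub>a (\<gamma> X)\<close> for some isometry \<open>\<Lambda>\<^sub>a\<close>, and \<open>\<gamma> \<circ> \<Lambda>\<^sub>a\<close> maps each point into its own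
  orbit, so for an invariant \<open>D\<close> we have \<open>\<Lambda>\<^sub>a -` \<gamma> -` D = D\<close>; moreover \<open>\<gamma>\<close> is 1-Lipschitz by
  the inequality \<open>\<langle>X, Y\<rangle> \<le> \<langle>\<gamma> X, \<gamma> Y\<rangle>\<close>. Interior, closure and closedness are therefore
  transported in both directions by the continuous maps \<open>\<gamma>\<close> and \<open>\<Lambda>\<^sub>a\<close>, and so is convexity from
  \<open>\<gamma> -` D\<close> to \<open>D\<close>. For the converse, the same inequality gives, for \<open>Z = u X + v Y\<close>, that
  every linear functional is bounded at \<open>\<gamma> Z\<close> by its maximum on the orbit of
  \<open>u \<gamma> X + v \<gamma> Y \<in> D\<close>; that orbit is compact, so by separation \<open>\<gamma> Z\<close> lies in its convex hull,
  which is contained in the convex invariant set \<open>D\<close>.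
\<close>

lemma linear_norm_preserving_inner:
  assumes "linear f" and "\<And>x. norm (f x) = norm x"
  shows "inner (f x) (f y) = inner x y"
  by (simp add: dot_norm assms(2) linear_add[OF assms(1), symmetric])

lemma mem_closed_convex_if_inner_le:
  fixes z :: "'a::{real_inner,heine_borel}"
  assumes "closed C" and "convex C" and le: "\<And>w. \<exists>q\<in>C. inner w z \<le> inner w q"
  shows "z \<in> C"
proof (rule ccontr)
  assume "z \<notin> C"
  then obtain a b where "inner a z < b" and "\<forall>x\<in>C. b < inner a x"
    using separating_hyperplane_closed_point[OF assms(2,1)] by blast
  moreover obtain q where "q \<in> C" and "inner (- a) z \<le> inner (- a) q"
    using le by blast
  ultimately show False by auto
qed

lemma lin_isometry_group_inner:
  assumes "lin_isometry_group S" and "s \<in> S"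
  shows "inner (s x) (s y) = inner x y"
proof -
  have "linear s" and "\<And>x. norm (s x) = norm x"
    using assms by (auto simp: lin_isometry_group_def)
  then show ?thesis
    by (rule linear_norm_preserving_inner)
qed

lemma lin_isometry_group_inverse:
  assumes "lin_isometry_group S" and "s \<in> S"
  obtains t where "t \<in> S" and "\<And>x. t (s x) = x" and "\<And>x. s (t x) = x"
proof -
  obtain t where "t \<in> S" and "s \<circ> t = id" and "t \<circ> s = id"
    using assms unfolding lin_isometry_group_def by blast
  then show thesis
    using that by (simp add: pointfree_idE)
qed

lemma orbit_sym:
  assumes "lin_isometry_group S" and "y \<in> orbit S x"
  shows "x \<in> orbit S y"
proof -
  obtain s where s: "s \<in> S" "y = s x"
    using assms(2) unfolding orbit_def by blast
  obtain t where "t \<in> S" and "t y = x"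
    using lin_isometry_group_inverse[OF assms(1) s(1)] s(2) by metis
  then show ?thesis
    unfolding orbit_def by blast
qed

lemma orbit_trans:
  assumes "lin_isometry_group S" and "y \<in> orbit S x" and "z \<in> orbit S y"
  shows "z \<in> orbit S x"
proof -
  obtain s t where "s \<in> S" "y = s x" "t \<in> S" "z = t y"
    using assms(2,3) by (auto simp: orbit_def)
  then have "z = (t \<circ> s) x" and "t \<circ> s \<in> S"
    using assms(1) by (simp_all add: lin_isometry_group_def)
  then show ?thesis
    unfolding orbit_def by blast
qed

lemma orbit_subset_sphere:
  assumes "lin_isometry_group S"
  shows "orbit S x \<subseteq> sphere 0 (norm x)"
  using assms by (auto simp: orbit_def lin_isometry_group_def)

lemma S_invariant_set_orbit_subset:
  assumes "S_invariant_set S D" and "x \<in> D"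
  shows "orbit S x \<subseteq> D"
  using assms by (auto simp: orbit_def S_invariant_set_def)

lemma S_invariant_set_orbit_iff:
  assumes "lin_isometry_group S" and "S_invariant_set S D" and "y \<in> orbit S x"
  shows "y \<in> D \<longleftrightarrow> x \<in> D"
  using S_invariant_set_orbit_subset[OF assms(2)] orbit_sym[OF assms(1,3)] assms(3) by blast

locale spectral_decomposition =
  fixes S :: "('x::euclidean_space \<Rightarrow> 'x) set"
    and \<gamma> :: "'h::euclidean_space \<Rightarrow> 'x"
    and A :: "'a set"
    and \<Lambda> :: "'a \<Rightarrow> 'x \<Rightarrow> 'h"
    and \<tau> :: "'x \<Rightarrow> 'x"
  assumes group: "lin_isometry_group S"
    and linear_Lambda: "a \<in> A \<Longrightarrow> linear (\<Lambda> a)"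
    and norm_Lambda: "a \<in> A \<Longrightarrow> norm (\<Lambda> a x) = norm x"
    and tau_invariant: "s \<in> S \<Longrightarrow> \<tau> (s x) = \<tau> x"
    and tau_in_orbit: "\<tau> x \<in> orbit S x"
    and gamma_Lambda: "a \<in> A \<Longrightarrow> \<gamma> (\<Lambda> a x) = \<tau> x"
    and decomposition: "\<exists>a\<in>A. X = \<Lambda> a (\<gamma> X)"
    and inner_le_inner_gamma: "inner X Y \<le> inner (\<gamma> X) (\<gamma> Y)"

lemma spectral_decomposition_systemE:
  assumes "spectral_decomposition_system S \<gamma> A \<Lambda>"
  obtains \<tau> where "spectral_decomposition S \<gamma> A \<Lambda> \<tau>"
proof -
  obtain \<tau> where "S_invariant_fun S \<tau>" and "\<forall>x. \<tau> x \<in> orbit S x"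
    and "\<forall>a\<in>A. \<gamma> \<circ> \<Lambda> a = \<tau>"
    using assms unfolding spectral_decomposition_system_def by blast
  with assms have "spectral_decomposition S \<gamma> A \<Lambda> \<tau>"
    unfolding spectral_decomposition_system_def spectral_decomposition_def S_invariant_fun_def
    by (simp add: fun_eq_iff)
  then show thesis
    by (rule that)
qed

context spectral_decomposition
begin

lemma inner_Lambda: "a \<in> A \<Longrightarrow> inner (\<Lambda> a x) (\<Lambda> a y) = inner x y"
  using linear_Lambda norm_Lambda by (rule linear_norm_preserving_inner)

lemma continuous_on_Lambda: "a \<in> A \<Longrightarrow> continuous_on U (\<Lambda> a)"
  using linear_Lambda by (simp add: linear_continuous_on linear_conv_bounded_linear)

lemma A_nonempty: "A \<noteq> {}"
  using decomposition by blast

lemma norm_gamma: "norm (\<gamma> X) = norm X"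
  using decomposition norm_Lambda by metis

lemma norm_diff_gamma_le: "norm (\<gamma> X - \<gamma> Y) \<le> norm (X - Y)"
proof -
  have "inner (\<gamma> X) (\<gamma> X) = inner X X" and "inner (\<gamma> Y) (\<gamma> Y) = inner Y Y"
    by (simp_all add: norm_gamma flip: power2_norm_eq_inner)
  then have "(norm (\<gamma> X - \<gamma> Y))\<^sup>2 \<le> (norm (X - Y))\<^sup>2"
    using inner_le_inner_gamma[of X Y]
    by (simp add: power2_norm_eq_inner inner_diff inner_commute algebra_simps)
  then show ?thesis
    by (rule power2_le_imp_le) simp
qed

lemma continuous_on_gamma: "continuous_on U \<gamma>"
proof -
  have "1-lipschitz_on U \<gamma>"
    by (rule lipschitz_onI) (simp_all add: dist_norm norm_diff_gamma_le)
  then show ?thesis by (rule lipschitz_on_continuous_on)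
qed

lemma vimage_Lambda_vimage_gamma:
  assumes "S_invariant_set S D" and "a \<in> A"
  shows "\<Lambda> a -` \<gamma> -` D = D"
  using S_invariant_set_orbit_iff[OF group assms(1) tau_in_orbit] gamma_Lambda[OF assms(2)] by auto

lemma interior_vimage_gamma:
  assumes "S_invariant_set S D"
  shows "interior (\<gamma> -` D) = \<gamma> -` interior D"
proof
  show "\<gamma> -` interior D \<subseteq> interior (\<gamma> -` D)"
    by (intro interior_maximal vimage_mono interior_subset open_vimage open_interior
        continuous_on_gamma)
  show "interior (\<gamma> -` D) \<subseteq> \<gamma> -` interior D"
  proof
    fix X assume X: "X \<in> interior (\<gamma> -` D)"
    obtain a where a: "a \<in> A" "X = \<Lambda> a (\<gamma> X)"
      using decomposition by blast
    have "\<Lambda> a -` interior (\<gamma> -` D) \<subseteq> interior D"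
      using interior_subset[of "\<gamma> -` D"] vimage_Lambda_vimage_gamma[OF assms a(1)]
      by (intro interior_maximal open_vimage open_interior continuous_on_Lambda[OF a(1)]) blast
    with X a show "X \<in> \<gamma> -` interior D" by auto
  qed
qed

lemma closure_vimage_gamma:
  assumes "S_invariant_set S D"
  shows "closure (\<gamma> -` D) = \<gamma> -` closure D"
proof
  show "closure (\<gamma> -` D) \<subseteq> \<gamma> -` closure D"
    by (intro closure_minimal vimage_mono closure_subset closed_vimage closed_closure
        continuous_on_gamma)
  show "\<gamma> -` closure D \<subseteq> closure (\<gamma> -` D)"
  proof
    fix X assume X: "X \<in> \<gamma> -` closure D"
    obtain a where a: "a \<in> A" "X = \<Lambda> a (\<gamma> X)"
      using decomposition by blast
    have "\<Lambda> a ` closure D \<subseteq> closure (\<gamma> -` D)"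
      using closure_subset[of "\<gamma> -` D"] vimage_Lambda_vimage_gamma[OF assms a(1)]
      by (intro image_closure_subset continuous_on_Lambda[OF a(1)] closed_closure) blast
    with X a show "X \<in> closure (\<gamma> -` D)"
      by (metis image_eqI subsetD vimageE)
  qed
qed

lemma closed_vimage_gamma_iff:
  assumes "S_invariant_set S D"
  shows "closed (\<gamma> -` D) \<longleftrightarrow> closed D"
proof -
  obtain a where a: "a \<in> A"
    using A_nonempty by blast
  have "closed D" if "closed (\<gamma> -` D)"
    using closed_vimage[OF that continuous_on_Lambda[OF a]]
    by (simp add: vimage_Lambda_vimage_gamma[OF assms a])
  then show ?thesis
    using closed_vimage[OF _ continuous_on_gamma] by blast
qed

lemma inner_le_inner_tau:
  assumes "q \<in> orbit S x"
  shows "inner w q \<le> inner (\<tau> w) (\<tau> x)"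
proof -
  obtain a where a: "a \<in> A"
    using A_nonempty by blast
  obtain s where s: "s \<in> S" "q = s x"
    using assms by (auto simp: orbit_def)
  have "inner w q = inner (\<Lambda> a w) (\<Lambda> a q)"
    by (simp add: inner_Lambda[OF a])
  also have "\<dots> \<le> inner (\<gamma> (\<Lambda> a w)) (\<gamma> (\<Lambda> a q))"
    by (rule inner_le_inner_gamma)
  also have "\<dots> = inner (\<tau> w) (\<tau> x)"
    using s by (simp add: gamma_Lambda[OF a] tau_invariant)
  finally show ?thesis .
qed

lemma norm_tau: "norm (\<tau> x) = norm x"
  using subsetD[OF orbit_subset_sphere[OF group] tau_in_orbit] by simp

text \<open>For a limit point \<open>p\<close> of the orbit of \<open>x\<close>, the bound \<open>inner_le_inner_tau\<close> with
  \<open>w = p\<close> forces equality in Cauchy--Schwarz, hence \<open>\<tau> p = \<tau> x\<close>.\<close>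

lemma closed_orbit: "closed (orbit S x)"
proof -
  have "p \<in> orbit S x" if p: "p \<in> closure (orbit S x)" for p
  proof -
    have "closure (orbit S x) \<subseteq> {q. inner p q \<le> inner (\<tau> p) (\<tau> x)}"
      using inner_le_inner_tau by (intro closure_minimal closed_halfspace_le) blast
    with p have le: "inner p p \<le> inner (\<tau> p) (\<tau> x)" by blast
    have "norm p = norm x"
      using subsetD[OF closure_minimal[OF orbit_subset_sphere[OF group] closed_sphere] p] by simp
    then have norms: "inner (\<tau> p) (\<tau> p) = inner p p" "inner (\<tau> x) (\<tau> x) = inner p p"
      by (simp_all add: norm_tau flip: power2_norm_eq_inner)
    have "inner (\<tau> p) (\<tau> x) \<le> inner p p"
      using norm_cauchy_schwarz[of "\<tau> p" "\<tau> x"] norms by (simp add: norm_eq_sqrt_inner)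
    with le norms have "\<tau> p = \<tau> x"
      by (subst vector_eq) (simp add: inner_commute)
    then have "\<tau> p \<in> orbit S x"
      by (simp add: tau_in_orbit)
    then show ?thesis
      using orbit_sym orbit_trans group tau_in_orbit by metis
  qed
  then show ?thesis
    using closure_subset_eq by blast
qed

lemma compact_orbit: "compact (orbit S x)"
  using closed_orbit bounded_subset[OF bounded_sphere orbit_subset_sphere[OF group]]
  by (simp add: compact_eq_bounded_closed)

lemma inner_gamma_le_orbit:
  assumes "0 \<le> u" and "0 \<le> v"
  obtains q where "q \<in> orbit S (u *\<^sub>R \<gamma> X + v *\<^sub>R \<gamma> Y)"
    and "inner w (\<gamma> (u *\<^sub>R X + v *\<^sub>R Y)) \<le> inner w q"
proof -
  define Z where "Z = u *\<^sub>R X + v *\<^sub>R Y"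
  define c where "c = u *\<^sub>R \<gamma> X + v *\<^sub>R \<gamma> Y"
  obtain a where a: "a \<in> A" and Z: "\<Lambda> a (\<gamma> Z) = Z"
    using decomposition by metis
  obtain s where s: "s \<in> S" "\<tau> w = s w"
    using tau_in_orbit[of w] by (auto simp: orbit_def)
  obtain t where t: "t \<in> S" "\<And>x. s (t x) = x"
    using lin_isometry_group_inverse[OF group s(1)] by metis
  have "inner w (\<gamma> Z) = inner (\<Lambda> a w) (\<Lambda> a (\<gamma> Z))"
    by (rule inner_Lambda[OF a, symmetric])
  also have "\<dots> = u * inner (\<Lambda> a w) X + v * inner (\<Lambda> a w) Y"
    by (simp only: Z) (simp add: Z_def inner_add_right)
  also have "\<dots> \<le> u * inner (\<gamma> (\<Lambda> a w)) (\<gamma> X) + v * inner (\<gamma> (\<Lambda> a w)) (\<gamma> Y)"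
    using assms by (intro add_mono mult_left_mono inner_le_inner_gamma)
  also have "\<dots> = inner (s w) (s (t c))"
    by (simp add: t(2) c_def inner_add_right gamma_Lambda[OF a] s(2))
  also have "\<dots> = inner w (t c)"
    by (rule lin_isometry_group_inner[OF group s(1)])
  finally have "inner w (\<gamma> Z) \<le> inner w (t c)" .
  moreover have "t c \<in> orbit S c"
    unfolding orbit_def using t(1) by (rule imageI)
  ultimately show thesis
    using that unfolding Z_def c_def by blast
qed

lemma gamma_convex_combination_in_hull:
  assumes "0 \<le> u" and "0 \<le> v"
  shows "\<gamma> (u *\<^sub>R X + v *\<^sub>R Y) \<in> convex hull orbit S (u *\<^sub>R \<gamma> X + v *\<^sub>R \<gamma> Y)"
proof (rule mem_closed_convex_if_inner_le)
  show "closed (convex hull orbit S (u *\<^sub>R \<gamma> X + v *\<^sub>R \<gamma> Y))"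
    by (intro compact_imp_closed compact_convex_hull compact_orbit)
  show "convex (convex hull orbit S (u *\<^sub>R \<gamma> X + v *\<^sub>R \<gamma> Y))"
    by (rule convex_convex_hull)
  fix w
  obtain q where q: "q \<in> orbit S (u *\<^sub>R \<gamma> X + v *\<^sub>R \<gamma> Y)"
    and le: "inner w (\<gamma> (u *\<^sub>R X + v *\<^sub>R Y)) \<le> inner w q"
    using inner_gamma_le_orbit[OF assms] .
  show "\<exists>q\<in>convex hull orbit S (u *\<^sub>R \<gamma> X + v *\<^sub>R \<gamma> Y).
      inner w (\<gamma> (u *\<^sub>R X + v *\<^sub>R Y)) \<le> inner w q"
    using le by (intro bexI[of _ q] hull_inc q)
qed

lemma convex_vimage_gamma_iff:
  assumes "S_invariant_set S D"
  shows "convex (\<gamma> -` D) \<longleftrightarrow> convex D"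
proof
  obtain a where a: "a \<in> A"
    using A_nonempty by blast
  show "convex D" if "convex (\<gamma> -` D)"
    using convex_linear_vimage[OF linear_Lambda[OF a] that]
    by (simp add: vimage_Lambda_vimage_gamma[OF assms a])
next
  assume D: "convex D"
  show "convex (\<gamma> -` D)"
  proof (rule convexI)
    fix X Y u v
    assume "X \<in> \<gamma> -` D" "Y \<in> \<gamma> -` D" "0 \<le> u" "0 \<le> v" "u + v = (1::real)"
    then have "u *\<^sub>R \<gamma> X + v *\<^sub>R \<gamma> Y \<in> D"
      using convexD[OF D] by simp
    then have "convex hull orbit S (u *\<^sub>R \<gamma> X + v *\<^sub>R \<gamma> Y) \<subseteq> D"
      by (intro hull_minimal S_invariant_set_orbit_subset[OF assms] D)
    with gamma_convex_combination_in_hull[OF \<open>0 \<le> u\<close> \<open>0 \<le> v\<close>]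
    show "u *\<^sub>R X + v *\<^sub>R Y \<in> \<gamma> -` D" by blast
  qed
qed

end

theorem corollary4p8:
  fixes S :: "('x::euclidean_space \<Rightarrow> 'x) set"
    and \<gamma> :: "'h::euclidean_space \<Rightarrow> 'x"
    and A :: "'a set"
    and \<Lambda> :: "'a \<Rightarrow> 'x \<Rightarrow> 'h"
    and D :: "'x set"
  assumes "spectral_decomposition_system S \<gamma> A \<Lambda>"
    and "S_invariant_set S D"
  shows "interior (\<gamma> -` D) = \<gamma> -` (interior D) \<and>
         closure (\<gamma> -` D) = \<gamma> -` (closure D) \<and>
         (closed (\<gamma> -` D) \<longleftrightarrow> closed D) \<and>
         (convex (\<gamma> -` D) \<longleftrightarrow> convex D)"
proof -
  obtain \<tau> where "spectral_decomposition S \<gamma> A \<Lambda> \<tau>"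
    using assms(1) by (rule spectral_decomposition_systemE)
  then interpret spectral_decomposition S \<gamma> A \<Lambda> \<tau> .
  show ?thesis
    using assms(2) by (simp add: interior_vimage_gamma closure_vimage_gamma
        closed_vimage_gamma_iff convex_vimage_gamma_iff)
qed

end
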